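(* Let $U,V\in\mathbb{R}^n$ be random vectors whose coordinate pairs $(U_i,V_i)$ are i.i.d. with finite fourth moments, independent of $\Pi$, and let $\Pi$ be a random sampling with replacement matrix with sampling probabilities $p_1,\ldots,p_n$. Then $$\mathbb{E}\left[n^{-1}(U^T\Pi^T\Pi V-U^TV)\right]=0,\qquad \mathrm{Var}\left[n^{-1}(U^T\Pi^T\Pi V-U^TV)\right]=\left\{\frac1m-\frac1n+\left(1-\frac1m\right)\sum_{i=1}^np_i^2\right\}\mathrm{Var}(U_iV_i).$$
   Context: Random sampling with replacement: for deterministic $p_1,\dots,p_n\ge0$ summing to 1, draw $k_1,\ldots,k_m$ independently from $\{1,\ldots,n\}$ with $\Pr(k_t=i)=p_i$ and set $\Pi=\sqrt{n/m}\,(\iota_{k_1},\ldots,\iota_{k_m})^T\in\mathbb{R}^{m\times n}$, where $\iota_k$ is the $k$-th column of the $n\times n$ identity matrix. *)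

theory Defs
  imports "HOL-Probability.Probability"
begin

text \<open>Indices are 0-based: rows t < m, columns i < n.
  Entry (t,i) of the sampling-with-replacement matrix
  Pi = sqrt(n/m) (iota_{k_0},...,iota_{k_{m-1}})^T.\<close>
definition sampling_matrix :: "nat \<Rightarrow> nat \<Rightarrow> (nat \<Rightarrow> nat) \<Rightarrow> nat \<Rightarrow> nat \<Rightarrow> real" where
  "sampling_matrix n m k t i = sqrt (real n / real m) * (if k t = i then 1 else 0)"

definition sketched_inner :: "nat \<Rightarrow> nat \<Rightarrow> (nat \<Rightarrow> nat \<Rightarrow> real) \<Rightarrow> (nat \<Rightarrow> real) \<Rightarrow> (nat \<Rightarrow> real) \<Rightarrow> real" where
  "sketched_inner n m P u v = (\<Sum>t<m. (\<Sum>i<n. P t i * u i) * (\<Sum>j<n. P t j * v j))"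

end

theory Submission imports Defs begin

(* Write W_i = U_i V_i and let N_i be the number of draws k_t equal to i.  The sketching error is
   T = sum_i c_i W_i with c_i = N_i/m - 1/n.  The coefficients are functions of the draws and the
   W_i of the data, so independence gives E T = sum_i E c_i E W_i = mu sum_i (p_i - 1/n) = 0 and
   E T^2 = sum_{i,j} E[W_i W_j] E[c_i c_j].  The data are i.i.d., so E[W_i W_j] = mu^2 + [i = j] sigma^2
   (fourth moments make these products integrable), while
   E[c_i c_j] = ([i = j] p_i - p_i p_j)/m + (p_i - 1/n)(p_j - 1/n) is the multinomial covariance of
   the counts plus the product of the means.  These moments sum to 0 over all (i, j), because
   sum_i c_i = 0 almost surely, so the mu^2 part cancels and
   E T^2 = sigma^2 sum_i E[c_i^2] = sigma^2 (1/m - 1/n + (1 - 1/m) sum_i p_i^2). *)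

lemma integrable_mult_of_square_integrable:
  fixes f g :: "'a \<Rightarrow> real"
  assumes "f \<in> borel_measurable M" "g \<in> borel_measurable M"
    and "integrable M (\<lambda>x. f x ^ 2)" "integrable M (\<lambda>x. g x ^ 2)"
  shows "integrable M (\<lambda>x. f x * g x)"
proof (rule Bochner_Integration.integrable_bound)
  show "integrable M (\<lambda>x. f x ^ 2 + g x ^ 2)"
    using assms by simp
  have "\<bar>a * b\<bar> \<le> a ^ 2 + b ^ 2" for a b :: real
  proof -
    have "2 * \<bar>a * b\<bar> \<le> a ^ 2 + b ^ 2"
      using sum_squares_bound[of "\<bar>a\<bar>" "\<bar>b\<bar>"] by (simp add: abs_mult)
    then show ?thesis
      using abs_ge_zero[of "a * b"] by linarith
  qed
  then show "AE x in M. norm (f x * g x) \<le> norm (f x ^ 2 + g x ^ 2)"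
    by simp
qed (use assms in measurable)

lemma integral_comp_eq_of_distr_eq:
  fixes h :: "'b \<Rightarrow> real"
  assumes "X \<in> measurable M N" "Y \<in> measurable M N" "distr M N X = distr M N Y"
    and "h \<in> borel_measurable N"
  shows "(\<integral>x. h (X x) \<partial>M) = (\<integral>x. h (Y x) \<partial>M)"
  using assms by (metis integral_distr)

lemma (in prob_space) indep_var_of_indep_set_preimages:
  assumes "random_variable S X" "random_variable T Y"
    and "indep_set {X -` A \<inter> space M | A. A \<in> sets S} {Y -` B \<inter> space M | B. B \<in> sets T}"
  shows "indep_var S X T Y"
proof -
  have "(\<lambda>i. {case_bool X Y i -` A \<inter> space M | A. A \<in> sets (case_bool S T i)})
      = case_bool {X -` A \<inter> space M | A. A \<in> sets S} {Y -` B \<inter> space M | B. B \<in> sets T}"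
    by (simp add: fun_eq_iff split: bool.split)
  with assms show ?thesis
    unfolding indep_var_def indep_vars_def2 indep_set_def by (auto split: bool.split)
qed

lemma preimages_comp_subset:
  assumes "X \<in> measurable M S" "f \<in> measurable S N"
  shows "{(\<lambda>\<omega>. f (X \<omega>)) -` A \<inter> space M | A. A \<in> sets N} \<subseteq> {X -` A \<inter> space M | A. A \<in> sets S}"
proof safe
  fix A assume "A \<in> sets N"
  then have "f -` A \<inter> space S \<in> sets S"
    using assms(2) by (rule measurable_sets[rotated])
  moreover have "(\<lambda>\<omega>. f (X \<omega>)) -` A \<inter> space M = X -` (f -` A \<inter> space S) \<inter> space M"
    using measurable_space[OF assms(1)] by auto
  ultimately show "\<exists>B. (\<lambda>\<omega>. f (X \<omega>)) -` A \<inter> space M = X -` B \<inter> space M \<and> B \<in> sets S"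
    by blast
qed

lemma (in prob_space) indep_var_comp_of_indep_set_preimages:
  assumes X: "random_variable S X" and Y: "random_variable T Y"
    and indep: "indep_set {X -` A \<inter> space M | A. A \<in> sets S} {Y -` B \<inter> space M | B. B \<in> sets T}"
    and f: "f \<in> measurable S N" and g: "g \<in> measurable T N"
  shows "indep_var N (\<lambda>\<omega>. f (X \<omega>)) N (\<lambda>\<omega>. g (Y \<omega>))"
proof (rule indep_var_of_indep_set_preimages)
  show "random_variable N (\<lambda>\<omega>. f (X \<omega>))" "random_variable N (\<lambda>\<omega>. g (Y \<omega>))"
    using measurable_compose[OF X f] measurable_compose[OF Y g] by simp_all
  show "indep_set {(\<lambda>\<omega>. f (X \<omega>)) -` A \<inter> space M | A. A \<in> sets N}
      {(\<lambda>\<omega>. g (Y \<omega>)) -` B \<inter> space M | B. B \<in> sets N}"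
    using indep unfolding indep_set_def
    by (rule indep_sets_mono_sets)
      (use preimages_comp_subset[OF X f] preimages_comp_subset[OF Y g] in \<open>simp split: bool.split\<close>)
qed

lemma has_bochner_integral_sum_sum:
  "(\<And>i j. i \<in> A \<Longrightarrow> j \<in> B \<Longrightarrow> has_bochner_integral M (F i j) (v i j)) \<Longrightarrow>
    has_bochner_integral M (\<lambda>\<omega>. \<Sum>i\<in>A. \<Sum>j\<in>B. F i j \<omega>) (\<Sum>i\<in>A. \<Sum>j\<in>B. v i j)"
  by (intro has_bochner_integral_sum)

lemma (in prob_space) has_bochner_integral_const: "has_bochner_integral M (\<lambda>_. c) (c :: real)"
  by (simp add: has_bochner_integral_iff prob_space)

lemma has_bochner_integral_eq_cong:
  assumes "has_bochner_integral M f x" "\<And>\<omega>. \<omega> \<in> space M \<Longrightarrow> f \<omega> = g \<omega>" "x = y"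
  shows "has_bochner_integral M g y"
  using assms has_bochner_integral_cong[of M M f g x y] by simp

definition sampling_coeff :: "nat \<Rightarrow> nat \<Rightarrow> (nat \<Rightarrow> nat) \<Rightarrow> nat \<Rightarrow> real" where
  "sampling_coeff n m k i = (\<Sum>t<m. of_bool (k t = i) - 1 / real n) / real m"

lemma sum_of_bool_eq_mult:
  fixes n :: nat and x :: "nat \<Rightarrow> real"
  shows "(\<Sum>i<n. of_bool (j = i) * x i) = of_bool (j < n) * x j"
  by (induction n) (auto simp: less_Suc_eq)

lemma sketched_inner_sampling_matrix:
  "sketched_inner n m (sampling_matrix n m k) u v
     = real n / real m * (\<Sum>i<n. (\<Sum>t<m. of_bool (k t = i)) * (u i * v i))"
proof -
  have sqrt_sq: "sqrt (real n / real m) * x * (sqrt (real n / real m) * y) = real n / real m * (x * y)" for x y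
  proof -
    have "sqrt (real n / real m) * sqrt (real n / real m) = real n / real m"
      by simp
    then show ?thesis
      by (metis mult.assoc mult.left_commute)
  qed
  have row: "(\<Sum>i<n. sampling_matrix n m k t i * x i)
      = sqrt (real n / real m) * (of_bool (k t < n) * x (k t))" for t x
    unfolding sampling_matrix_def sum_of_bool_eq_mult[symmetric]
    by (simp add: sum_distrib_left of_bool_def mult.assoc)
  have "sketched_inner n m (sampling_matrix n m k) u v
      = (\<Sum>t<m. real n / real m * (\<Sum>i<n. of_bool (k t = i) * (u i * v i)))"
    unfolding sketched_inner_def row sum_of_bool_eq_mult sqrt_sq by (intro sum.cong refl) (simp add: of_bool_def)
  also have "\<dots> = real n / real m * (\<Sum>t<m. \<Sum>i<n. of_bool (k t = i) * (u i * v i))"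
    by (rule sum_distrib_left[symmetric])
  also have "\<dots> = real n / real m * (\<Sum>i<n. \<Sum>t<m. of_bool (k t = i) * (u i * v i))"
    by (simp only: sum.swap[of "\<lambda>t i. of_bool (k t = i) * (u i * v i)" "{..<n}" "{..<m}"])
  also have "\<dots> = real n / real m * (\<Sum>i<n. (\<Sum>t<m. of_bool (k t = i)) * (u i * v i))"
    by (simp only: sum_distrib_right)
  finally show ?thesis .
qed

lemma sketch_error_sampling_matrix:
  assumes "0 < n" "0 < m"
  shows "(sketched_inner n m (sampling_matrix n m k) u v - (\<Sum>i<n. u i * v i)) / real n
       = (\<Sum>i<n. sampling_coeff n m k i * (u i * v i))"
proof -
  have "sampling_coeff n m k i = (\<Sum>t<m. of_bool (k t = i)) / real m - 1 / real n" for i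
    using assms by (simp add: sampling_coeff_def sum_subtractf diff_divide_distrib)
  then have "(\<Sum>i<n. sampling_coeff n m k i * (u i * v i))
      = (\<Sum>i<n. (\<Sum>t<m. of_bool (k t = i)) * (u i * v i)) / real m - (\<Sum>i<n. u i * v i) / real n"
    by (simp add: left_diff_distrib sum_subtractf sum_divide_distrib)
  with assms show ?thesis
    by (simp add: sketched_inner_sampling_matrix diff_divide_distrib)
qed

lemma measurable_component_mult:
  assumes "a \<in> I"
  shows "(\<lambda>x. fst (x a) * snd (x a) :: real) \<in> borel_measurable (\<Pi>\<^sub>M i\<in>I. borel \<Otimes>\<^sub>M borel)"
  using measurable_component_singleton[OF assms, of "\<lambda>_. borel \<Otimes>\<^sub>M borel"] by measurable

lemma sampling_coeff_restrict: "sampling_coeff n m (restrict k {..<m}) i = sampling_coeff n m k i"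
  by (simp add: sampling_coeff_def)

lemma measurable_sampling_coeff:
  "(\<lambda>y. sampling_coeff n m y i) \<in> borel_measurable (\<Pi>\<^sub>M t\<in>{..<m}. count_space UNIV)"
  unfolding sampling_coeff_def by measurable

locale sampling_with_replacement = prob_space M
  for M :: "'a measure" and n m :: nat and p :: "nat \<Rightarrow> real" and k :: "nat \<Rightarrow> 'a \<Rightarrow> nat" +
  assumes m_pos: "0 < m"
    and p_sum: "(\<Sum>i<n. p i) = 1"
    and k_rv: "\<And>t. t < m \<Longrightarrow> random_variable (count_space UNIV) (k t)"
    and k_dist: "\<And>t i. t < m \<Longrightarrow> i < n \<Longrightarrow> prob {\<omega> \<in> space M. k t \<omega> = i} = p i"
    and k_indep: "indep_vars (\<lambda>_. count_space UNIV) k {..<m}"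
begin

abbreviation coeff :: "nat \<Rightarrow> 'a \<Rightarrow> real" where
  "coeff i \<omega> \<equiv> sampling_coeff n m (\<lambda>t. k t \<omega>) i"

abbreviation coeff_moment :: "nat \<Rightarrow> nat \<Rightarrow> real" where
  "coeff_moment i j \<equiv> (of_bool (i = j) * p i - p i * p j) / real m + (p i - 1 / real n) * (p j - 1 / real n)"

lemma has_bochner_integral_draw_indicator:
  assumes "t < m" "i < n"
  shows "has_bochner_integral M (\<lambda>\<omega>. of_bool (k t \<omega> = i)) (p i)"
proof -
  note k_rv[OF assms(1), measurable]
  have "{\<omega> \<in> space M. k t \<omega> = i} \<in> events"
    by measurable
  then have "has_bochner_integral M (indicator {\<omega> \<in> space M. k t \<omega> = i}) (prob {\<omega> \<in> space M. k t \<omega> = i})"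
    by (intro has_bochner_integral_real_indicator) (auto simp: less_top[symmetric])
  then show ?thesis
    by (rule has_bochner_integral_eq_cong) (simp_all add: indicator_def k_dist[OF assms])
qed

lemma has_bochner_integral_draw_indicator_mult:
  assumes "s < m" "t < m" "i < n" "j < n"
  shows "has_bochner_integral M (\<lambda>\<omega>. of_bool (k s \<omega> = i) * of_bool (k t \<omega> = j))
    (if s = t then of_bool (i = j) * p i else p i * p j)"
proof (cases "s = t")
  case True
  have "has_bochner_integral M (\<lambda>\<omega>. of_bool (i = j) * of_bool (k t \<omega> = i)) (of_bool (i = j) * p i)"
    using has_bochner_integral_draw_indicator[OF assms(2,3)] by (rule has_bochner_integral_mult_right)
  then show ?thesis
    by (rule has_bochner_integral_eq_cong) (auto simp: True)
next
  case False
  define X :: "nat \<Rightarrow> 'a \<Rightarrow> real" where "X = (\<lambda>u \<omega>. of_bool (k u \<omega> = (if u = s then i else j)))"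
  have indep: "indep_vars (\<lambda>_. borel) X {s, t}"
    unfolding X_def using assms
    by (intro indep_vars_compose2[OF indep_vars_subset[OF k_indep]]) auto
  have X: "has_bochner_integral M (X u) (if u = s then p i else p j)" if "u \<in> {s, t}" for u
    using that assms has_bochner_integral_draw_indicator by (auto simp: X_def)
  have X_int: "integrable M (X u)" if "u \<in> {s, t}" for u
    using X[OF that] by (rule integrable.intros)
  have "has_bochner_integral M (\<lambda>\<omega>. \<Prod>u\<in>{s, t}. X u \<omega>) (\<Prod>u\<in>{s, t}. expectation (X u))"
    using indep_vars_lebesgue_integral[OF _ indep X_int] indep_vars_integrable[OF _ indep X_int]
    by (simp add: has_bochner_integral_iff)
  then show ?thesis
    by (rule has_bochner_integral_eq_cong) (use False X in \<open>auto simp: X_def has_bochner_integral_iff\<close>)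
qed

lemma has_bochner_integral_draw_deviation_mult:
  assumes "s < m" "t < m" "i < n" "j < n"
  shows "has_bochner_integral M (\<lambda>\<omega>. (of_bool (k s \<omega> = i) - 1 / real n) * (of_bool (k t \<omega> = j) - 1 / real n))
    (of_bool (s = t) * (of_bool (i = j) * p i - p i * p j) + (p i - 1 / real n) * (p j - 1 / real n))"
proof -
  have "has_bochner_integral M
      (\<lambda>\<omega>. of_bool (k s \<omega> = i) * of_bool (k t \<omega> = j) - of_bool (k s \<omega> = i) / real n
        - of_bool (k t \<omega> = j) / real n + 1 / real n ^ 2)
      ((if s = t then of_bool (i = j) * p i else p i * p j) - p i / real n - p j / real n + 1 / real n ^ 2)"
    using assms
    by (intro has_bochner_integral_add has_bochner_integral_diff has_bochner_integral_divide_zero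
        has_bochner_integral_draw_indicator_mult has_bochner_integral_draw_indicator has_bochner_integral_const)
  then show ?thesis
    by (rule has_bochner_integral_eq_cong) (auto simp: algebra_simps power2_eq_square)
qed

lemma has_bochner_integral_coeff:
  assumes "i < n"
  shows "has_bochner_integral M (coeff i) (p i - 1 / real n)"
proof -
  have "has_bochner_integral M (\<lambda>\<omega>. (\<Sum>t<m. of_bool (k t \<omega> = i) - 1 / real n) / real m)
      ((\<Sum>t<m. p i - 1 / real n) / real m)"
    using assms
    by (intro has_bochner_integral_divide_zero has_bochner_integral_sum has_bochner_integral_diff
        has_bochner_integral_draw_indicator has_bochner_integral_const) auto
  then show ?thesis
    by (rule has_bochner_integral_eq_cong) (use m_pos in \<open>simp_all add: sampling_coeff_def\<close>)
qed

lemma has_bochner_integral_coeff_mult: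
  assumes "i < n" "j < n"
  shows "has_bochner_integral M (\<lambda>\<omega>. coeff i \<omega> * coeff j \<omega>) (coeff_moment i j)"
proof -
  have double_sum: "(\<Sum>s<m. \<Sum>t<m. of_bool (s = t) * a + b) = real m * a + real m ^ 2 * b" for a b :: real
    by (simp add: sum.distrib power2_eq_square algebra_simps)
  have moment: "(\<Sum>s<m. \<Sum>t<m. of_bool (s = t) * (of_bool (i = j) * p i - p i * p j)
      + (p i - 1 / real n) * (p j - 1 / real n)) / real m ^ 2 = coeff_moment i j"
    unfolding double_sum using m_pos by (simp add: field_simps power2_eq_square)
  have "has_bochner_integral M
      (\<lambda>\<omega>. (\<Sum>s<m. \<Sum>t<m. (of_bool (k s \<omega> = i) - 1 / real n) * (of_bool (k t \<omega> = j) - 1 / real n))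
        / real m ^ 2)
      ((\<Sum>s<m. \<Sum>t<m. of_bool (s = t) * (of_bool (i = j) * p i - p i * p j)
          + (p i - 1 / real n) * (p j - 1 / real n)) / real m ^ 2)"
    using assms
    by (intro has_bochner_integral_divide_zero has_bochner_integral_sum has_bochner_integral_draw_deviation_mult) auto
  then show ?thesis
    by (rule has_bochner_integral_eq_cong[OF _ _ moment])
      (simp add: sampling_coeff_def sum_product power2_eq_square)
qed

lemma sum_coeff_moment: "(\<Sum>i<n. \<Sum>j<n. coeff_moment i j) = 0"
proof -
  have "0 < n"
    using p_sum by (cases n) auto
  then have centered: "(\<Sum>j<n. p j - 1 / real n) = 0"
    by (simp add: sum_subtractf p_sum)
  have "(\<Sum>j<n. coeff_moment i j) = 0" if "i < n" for i
    using that
    by (simp add: sum.distrib sum_subtractf centered p_sum flip: sum_divide_distrib sum_distrib_left sum_distrib_right)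
  then show ?thesis
    by simp
qed

lemma sum_coeff_moment_diag:
  "(\<Sum>i<n. coeff_moment i i) = 1 / real m - 1 / real n + (1 - 1 / real m) * (\<Sum>i<n. p i ^ 2)"
proof -
  have "0 < n"
    using p_sum by (cases n) auto
  have "coeff_moment i i = 1 / real m * p i + (1 - 1 / real m) * p i ^ 2 - 2 / real n * p i + 1 / real n ^ 2" for i
    by (simp add: power2_eq_square algebra_simps diff_divide_distrib)
  then have "(\<Sum>i<n. coeff_moment i i)
      = 1 / real m * (\<Sum>i<n. p i) + (1 - 1 / real m) * (\<Sum>i<n. p i ^ 2) - 2 / real n * (\<Sum>i<n. p i)
        + real n / real n ^ 2"
    by (simp add: sum.distrib sum_subtractf sum_distrib_left)
  with \<open>0 < n\<close> show ?thesis
    by (simp add: p_sum power2_eq_square)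
qed

end

locale iid_pairs = prob_space M
  for M :: "'a measure" and n :: nat and U V :: "nat \<Rightarrow> 'a \<Rightarrow> real" +
  assumes n_pos: "0 < n"
    and U_rv: "\<And>i. i < n \<Longrightarrow> random_variable borel (U i)"
    and V_rv: "\<And>i. i < n \<Longrightarrow> random_variable borel (V i)"
    and UV_indep: "indep_vars (\<lambda>_. borel \<Otimes>\<^sub>M borel) (\<lambda>i \<omega>. (U i \<omega>, V i \<omega>)) {..<n}"
    and UV_ident: "\<And>i. i < n \<Longrightarrow>
      distr M (borel \<Otimes>\<^sub>M borel) (\<lambda>\<omega>. (U i \<omega>, V i \<omega>)) = distr M (borel \<Otimes>\<^sub>M borel) (\<lambda>\<omega>. (U 0 \<omega>, V 0 \<omega>))"
    and U_4: "\<And>i. i < n \<Longrightarrow> integrable M (\<lambda>\<omega>. U i \<omega> ^ 4)"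
    and V_4: "\<And>i. i < n \<Longrightarrow> integrable M (\<lambda>\<omega>. V i \<omega> ^ 4)"
begin

abbreviation mean_UV :: real where
  "mean_UV \<equiv> expectation (\<lambda>\<omega>. U 0 \<omega> * V 0 \<omega>)"

abbreviation var_UV :: real where
  "var_UV \<equiv> variance (\<lambda>\<omega>. U 0 \<omega> * V 0 \<omega>)"

lemma UV_rv: "i < n \<Longrightarrow> (\<lambda>\<omega>. U i \<omega> * V i \<omega>) \<in> borel_measurable M"
  using U_rv V_rv by measurable

lemma integrable_UV_sq: "i < n \<Longrightarrow> integrable M (\<lambda>\<omega>. (U i \<omega> * V i \<omega>) ^ 2)"
  using integrable_mult_of_square_integrable[of "\<lambda>\<omega>. U i \<omega> ^ 2" M "\<lambda>\<omega>. V i \<omega> ^ 2"] U_rv V_rv U_4 V_4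
  by (simp add: power_mult_distrib flip: power_mult)

lemma integrable_UV_mult:
  "i < n \<Longrightarrow> j < n \<Longrightarrow> integrable M (\<lambda>\<omega>. U i \<omega> * V i \<omega> * (U j \<omega> * V j \<omega>))"
  using integrable_mult_of_square_integrable[OF UV_rv UV_rv integrable_UV_sq integrable_UV_sq] .

lemma integrable_UV: "i < n \<Longrightarrow> integrable M (\<lambda>\<omega>. U i \<omega> * V i \<omega>)"
  using square_integrable_imp_integrable[OF UV_rv integrable_UV_sq] .

lemma expectation_comp_UV:
  fixes h :: "real \<times> real \<Rightarrow> real"
  assumes "i < n" "h \<in> borel_measurable (borel \<Otimes>\<^sub>M borel)"
  shows "(\<integral>\<omega>. h (U i \<omega>, V i \<omega>) \<partial>M) = (\<integral>\<omega>. h (U 0 \<omega>, V 0 \<omega>) \<partial>M)"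
proof -
  have "random_variable (borel \<Otimes>\<^sub>M borel) (\<lambda>\<omega>. (U u \<omega>, V u \<omega>))" if "u < n" for u
    using U_rv[OF that] V_rv[OF that] by measurable
  with assms n_pos show ?thesis
    by (intro integral_comp_eq_of_distr_eq[where h = h, OF _ _ UV_ident[OF assms(1)]]) auto
qed

lemma has_bochner_integral_UV:
  assumes "i < n"
  shows "has_bochner_integral M (\<lambda>\<omega>. U i \<omega> * V i \<omega>) mean_UV"
proof -
  have "(\<lambda>z. fst z * snd z :: real) \<in> borel_measurable (borel \<Otimes>\<^sub>M borel)"
    by measurable
  from expectation_comp_UV[OF assms this] integrable_UV[OF assms] show ?thesis
    by (simp add: has_bochner_integral_iff)
qed

lemma has_bochner_integral_UV_mult:
  assumes "i < n" "j < n"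
  shows "has_bochner_integral M (\<lambda>\<omega>. U i \<omega> * V i \<omega> * (U j \<omega> * V j \<omega>))
    (mean_UV ^ 2 + of_bool (i = j) * var_UV)"
proof (cases "i = j")
  case True
  have "(\<lambda>z. (fst z * snd z) ^ 2 :: real) \<in> borel_measurable (borel \<Otimes>\<^sub>M borel)"
    by measurable
  from expectation_comp_UV[OF assms(1) this]
  have "expectation (\<lambda>\<omega>. (U i \<omega> * V i \<omega>) ^ 2) = expectation (\<lambda>\<omega>. (U 0 \<omega> * V 0 \<omega>) ^ 2)"
    by simp
  also have "\<dots> = mean_UV ^ 2 + var_UV"
    using n_pos integrable_UV integrable_UV_sq by (simp add: variance_eq)
  finally show ?thesis
    using True integrable_UV_mult[OF assms] by (simp add: has_bochner_integral_iff power2_eq_square)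
next
  case False
  have "indep_vars (\<lambda>_. borel) (\<lambda>u \<omega>. (\<lambda>z. fst z * snd z) (U u \<omega>, V u \<omega>)) {i, j}"
    by (rule indep_vars_compose2[OF indep_vars_subset[OF UV_indep]]) (use assms in auto)
  then have indep: "indep_vars (\<lambda>_. borel) (\<lambda>u \<omega>. U u \<omega> * V u \<omega>) {i, j}"
    by simp
  have int: "integrable M (\<lambda>\<omega>. U u \<omega> * V u \<omega>)" if "u \<in> {i, j}" for u
    using that assms by (auto intro: integrable_UV)
  have "expectation (\<lambda>\<omega>. \<Prod>u\<in>{i, j}. U u \<omega> * V u \<omega>) = (\<Prod>u\<in>{i, j}. expectation (\<lambda>\<omega>. U u \<omega> * V u \<omega>))"
    by (rule indep_vars_lebesgue_integral[OF _ indep int]) simp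
  moreover have "integrable M (\<lambda>\<omega>. \<Prod>u\<in>{i, j}. U u \<omega> * V u \<omega>)"
    by (rule indep_vars_integrable[OF _ indep int]) simp
  moreover have "expectation (\<lambda>\<omega>. U u \<omega> * V u \<omega>) = mean_UV" if "u \<in> {i, j}" for u
    using that assms has_bochner_integral_UV by (auto intro: has_bochner_integral_integral_eq)
  ultimately show ?thesis
    using False by (simp add: has_bochner_integral_iff power2_eq_square mult.assoc)
qed

end

locale sampled_sketch = sampling_with_replacement M n m p k + iid_pairs M n U V
  for M :: "'a measure" and n m :: nat and p :: "nat \<Rightarrow> real" and k :: "nat \<Rightarrow> 'a \<Rightarrow> nat"
    and U V :: "nat \<Rightarrow> 'a \<Rightarrow> real" +
  assumes data_sampling_indep: "indep_set
      {(\<lambda>\<omega>. \<lambda>i\<in>{..<n}. (U i \<omega>, V i \<omega>)) -` A \<inter> space M | A. A \<in> sets (\<Pi>\<^sub>M i\<in>{..<n}. borel \<Otimes>\<^sub>M borel)}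
      {(\<lambda>\<omega>. \<lambda>t\<in>{..<m}. k t \<omega>) -` B \<inter> space M | B. B \<in> sets (\<Pi>\<^sub>M t\<in>{..<m}. count_space UNIV)}"
begin

abbreviation data :: "'a \<Rightarrow> nat \<Rightarrow> real \<times> real" where
  "data \<omega> \<equiv> \<lambda>i\<in>{..<n}. (U i \<omega>, V i \<omega>)"

abbreviation draws :: "'a \<Rightarrow> nat \<Rightarrow> nat" where
  "draws \<omega> \<equiv> \<lambda>t\<in>{..<m}. k t \<omega>"

lemma has_bochner_integral_data_mult_sampling:
  fixes f g :: "_ \<Rightarrow> real"
  assumes f: "f \<in> borel_measurable (\<Pi>\<^sub>M i\<in>{..<n}. borel \<Otimes>\<^sub>M borel)"
    and g: "g \<in> borel_measurable (\<Pi>\<^sub>M t\<in>{..<m}. count_space UNIV)"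
    and x: "has_bochner_integral M (\<lambda>\<omega>. f (data \<omega>)) x"
    and y: "has_bochner_integral M (\<lambda>\<omega>. g (draws \<omega>)) y"
  shows "has_bochner_integral M (\<lambda>\<omega>. f (data \<omega>) * g (draws \<omega>)) (x * y)"
proof -
  have data_rv: "random_variable (\<Pi>\<^sub>M i\<in>{..<n}. borel \<Otimes>\<^sub>M borel) data"
    using U_rv V_rv by (intro measurable_restrict measurable_Pair) auto
  have draws_rv: "random_variable (\<Pi>\<^sub>M t\<in>{..<m}. count_space UNIV) draws"
    using k_rv by (intro measurable_restrict) auto
  have indep: "indep_var borel (\<lambda>\<omega>. f (data \<omega>)) borel (\<lambda>\<omega>. g (draws \<omega>))"
    by (rule indep_var_comp_of_indep_set_preimages[OF data_rv draws_rv data_sampling_indep f g])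
  note integrable = integrable.intros[OF x] integrable.intros[OF y]
  show ?thesis
    unfolding has_bochner_integral_iff
    using indep_var_lebesgue_integral[OF indep integrable] indep_var_integrable[OF indep integrable]
      has_bochner_integral_integral_eq[OF x] has_bochner_integral_integral_eq[OF y]
    by simp
qed

lemma has_bochner_integral_sketch_term:
  assumes "i < n" "j < n"
  shows "has_bochner_integral M (\<lambda>\<omega>. coeff i \<omega> * (U i \<omega> * V i \<omega>) * (coeff j \<omega> * (U j \<omega> * V j \<omega>)))
    ((mean_UV ^ 2 + of_bool (i = j) * var_UV) * coeff_moment i j)"
proof -
  let ?f = "\<lambda>x. fst (x i) * snd (x i) * (fst (x j) * snd (x j)) :: real"
  let ?g = "\<lambda>y. sampling_coeff n m y i * sampling_coeff n m y j"
  have f: "?f \<in> borel_measurable (\<Pi>\<^sub>M i\<in>{..<n}. borel \<Otimes>\<^sub>M borel)"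
    using assms by (intro borel_measurable_times measurable_component_mult) auto
  have g: "?g \<in> borel_measurable (\<Pi>\<^sub>M t\<in>{..<m}. count_space UNIV)"
    using measurable_sampling_coeff by measurable
  have "has_bochner_integral M (\<lambda>\<omega>. ?f (data \<omega>)) (mean_UV ^ 2 + of_bool (i = j) * var_UV)"
    by (rule has_bochner_integral_eq_cong[OF has_bochner_integral_UV_mult[OF assms]]) (simp_all add: assms)
  moreover have "has_bochner_integral M (\<lambda>\<omega>. ?g (draws \<omega>)) (coeff_moment i j)"
    by (rule has_bochner_integral_eq_cong[OF has_bochner_integral_coeff_mult[OF assms]]) (simp_all add: sampling_coeff_restrict)
  ultimately have "has_bochner_integral M
      (\<lambda>\<omega>. ?f (data \<omega>) * ?g (draws \<omega>))
      ((mean_UV ^ 2 + of_bool (i = j) * var_UV) * coeff_moment i j)"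
    by (rule has_bochner_integral_data_mult_sampling[OF f g])
  then show ?thesis
    by (rule has_bochner_integral_eq_cong) (simp_all add: assms sampling_coeff_restrict mult_ac)
qed

lemma has_bochner_integral_sketch_mean_term:
  assumes "i < n"
  shows "has_bochner_integral M (\<lambda>\<omega>. coeff i \<omega> * (U i \<omega> * V i \<omega>)) ((p i - 1 / real n) * mean_UV)"
proof -
  let ?f = "\<lambda>x. fst (x i) * snd (x i) :: real"
  let ?g = "\<lambda>y. sampling_coeff n m y i"
  have f: "?f \<in> borel_measurable (\<Pi>\<^sub>M i\<in>{..<n}. borel \<Otimes>\<^sub>M borel)"
    using assms by (intro measurable_component_mult) auto
  have "has_bochner_integral M (\<lambda>\<omega>. ?f (data \<omega>)) mean_UV"
    by (rule has_bochner_integral_eq_cong[OF has_bochner_integral_UV[OF assms]]) (simp_all add: assms)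
  moreover have "has_bochner_integral M (\<lambda>\<omega>. ?g (draws \<omega>)) (p i - 1 / real n)"
    by (rule has_bochner_integral_eq_cong[OF has_bochner_integral_coeff[OF assms]]) (simp_all add: sampling_coeff_restrict)
  ultimately have "has_bochner_integral M
      (\<lambda>\<omega>. ?f (data \<omega>) * ?g (draws \<omega>)) (mean_UV * (p i - 1 / real n))"
    by (rule has_bochner_integral_data_mult_sampling[OF f measurable_sampling_coeff])
  then show ?thesis
    by (rule has_bochner_integral_eq_cong) (simp_all add: assms sampling_coeff_restrict mult_ac)
qed

lemma has_bochner_integral_sketch_error:
  "has_bochner_integral M (\<lambda>\<omega>. \<Sum>i<n. coeff i \<omega> * (U i \<omega> * V i \<omega>)) 0"
proof -
  have "has_bochner_integral M (\<lambda>\<omega>. \<Sum>i<n. coeff i \<omega> * (U i \<omega> * V i \<omega>)) (\<Sum>i<n. (p i - 1 / real n) * mean_UV)"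
    by (intro has_bochner_integral_sum has_bochner_integral_sketch_mean_term) simp
  moreover have "(\<Sum>i<n. (p i - 1 / real n) * mean_UV) = 0"
    using n_pos by (simp add: sum_subtractf p_sum flip: sum_distrib_right)
  ultimately show ?thesis
    by simp
qed

lemma has_bochner_integral_sketch_error_sq:
  "has_bochner_integral M (\<lambda>\<omega>. (\<Sum>i<n. coeff i \<omega> * (U i \<omega> * V i \<omega>)) ^ 2)
    ((1 / real m - 1 / real n + (1 - 1 / real m) * (\<Sum>i<n. p i ^ 2)) * var_UV)"
proof -
  have split_diagonal: "(\<Sum>i<n. \<Sum>j<n. (a + of_bool (i = j) * b) * e i j)
      = a * (\<Sum>i<n. \<Sum>j<n. e i j) + b * (\<Sum>i<n. e i i)" for a b :: real and e :: "nat \<Rightarrow> nat \<Rightarrow> real"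
  proof -
    have "(\<Sum>j<n. of_bool (i = j) * (b * e i j)) = b * e i i" if "i < n" for i
      using that by (simp add: sum_of_bool_eq_mult)
    then show ?thesis
      by (simp add: distrib_right sum.distrib sum_distrib_left mult.assoc)
  qed
  have moment_sum: "(\<Sum>i<n. \<Sum>j<n. (mean_UV ^ 2 + of_bool (i = j) * var_UV) * coeff_moment i j)
      = (1 / real m - 1 / real n + (1 - 1 / real m) * (\<Sum>i<n. p i ^ 2)) * var_UV"
    unfolding split_diagonal sum_coeff_moment sum_coeff_moment_diag by simp
  have "has_bochner_integral M
      (\<lambda>\<omega>. \<Sum>i<n. \<Sum>j<n. coeff i \<omega> * (U i \<omega> * V i \<omega>) * (coeff j \<omega> * (U j \<omega> * V j \<omega>)))
      (\<Sum>i<n. \<Sum>j<n. (mean_UV ^ 2 + of_bool (i = j) * var_UV) * coeff_moment i j)"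
    by (rule has_bochner_integral_sum_sum) (simp add: has_bochner_integral_sketch_term)
  then show ?thesis
    by (rule has_bochner_integral_eq_cong[OF _ _ moment_sum]) (simp only: power2_eq_square sum_product)
qed

end

theorem lemmaA2:
  fixes M :: "'a measure" and n m :: nat and p :: "nat \<Rightarrow> real"
    and U V :: "nat \<Rightarrow> 'a \<Rightarrow> real" and k :: "nat \<Rightarrow> 'a \<Rightarrow> nat"
  defines "T \<equiv> (\<lambda>\<omega>. (sketched_inner n m (sampling_matrix n m (\<lambda>t. k t \<omega>)) (\<lambda>i. U i \<omega>) (\<lambda>i. V i \<omega>)
                       - (\<Sum>i<n. U i \<omega> * V i \<omega>)) / real n)"
  assumes M: "prob_space M"
    and n: "n \<ge> 1" and m: "m \<ge> 1"
    and p_nonneg: "\<And>i. i < n \<Longrightarrow> p i \<ge> 0"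
    and p_sum: "(\<Sum>i<n. p i) = 1"
    and k_rv: "\<And>t. t < m \<Longrightarrow> k t \<in> measurable M (count_space UNIV)"
    and k_dist: "\<And>t i. t < m \<Longrightarrow> i < n \<Longrightarrow> measure M {\<omega> \<in> space M. k t \<omega> = i} = p i"
    and k_indep: "prob_space.indep_vars M (\<lambda>_. count_space UNIV) k {..<m}"
    and U_rv: "\<And>i. i < n \<Longrightarrow> U i \<in> borel_measurable M"
    and V_rv: "\<And>i. i < n \<Longrightarrow> V i \<in> borel_measurable M"
    and UV_indep: "prob_space.indep_vars M (\<lambda>_. borel \<Otimes>\<^sub>M borel) (\<lambda>i \<omega>. (U i \<omega>, V i \<omega>)) {..<n}"
    and UV_ident: "\<And>i. i < n \<Longrightarrow>
        distr M (borel \<Otimes>\<^sub>M borel) (\<lambda>\<omega>. (U i \<omega>, V i \<omega>)) = distr M (borel \<Otimes>\<^sub>M borel) (\<lambda>\<omega>. (U 0 \<omega>, V 0 \<omega>))"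
    and U_4: "\<And>i. i < n \<Longrightarrow> integrable M (\<lambda>\<omega>. U i \<omega> ^ 4)"
    and V_4: "\<And>i. i < n \<Longrightarrow> integrable M (\<lambda>\<omega>. V i \<omega> ^ 4)"
    and indep_Pi: "prob_space.indep_set M
        {(\<lambda>\<omega>. \<lambda>i\<in>{..<n}. (U i \<omega>, V i \<omega>)) -` A \<inter> space M | A.
           A \<in> sets (\<Pi>\<^sub>M i\<in>{..<n}. borel \<Otimes>\<^sub>M borel)}
        {(\<lambda>\<omega>. \<lambda>t\<in>{..<m}. k t \<omega>) -` B \<inter> space M | B.
           B \<in> sets (\<Pi>\<^sub>M t\<in>{..<m}. count_space UNIV)}"
  shows "integrable M T \<and> integrable M (\<lambda>\<omega>. T \<omega> ^ 2)
    \<and> (\<integral>\<omega>. T \<omega> \<partial>M) = 0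
    \<and> (\<integral>\<omega>. (T \<omega> - (\<integral>\<omega>'. T \<omega>' \<partial>M)) ^ 2 \<partial>M)
        = (1 / real m - 1 / real n + (1 - 1 / real m) * (\<Sum>i<n. p i ^ 2))
          * (\<integral>\<omega>. (U 0 \<omega> * V 0 \<omega> - (\<integral>\<omega>'. U 0 \<omega>' * V 0 \<omega>' \<partial>M)) ^ 2 \<partial>M)"
proof -
  interpret sampled_sketch M n m p k U V
  proof (intro sampled_sketch.intro sampling_with_replacement.intro iid_pairs.intro
      sampling_with_replacement_axioms.intro iid_pairs_axioms.intro sampled_sketch_axioms.intro)
    show "0 < m" "0 < n"
      using n m by simp_all
  qed (fact assms)+
  have "T = (\<lambda>\<omega>. \<Sum>i<n. coeff i \<omega> * (U i \<omega> * V i \<omega>))"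
    using n m by (simp add: T_def sketch_error_sampling_matrix fun_eq_iff)
  with has_bochner_integral_sketch_error has_bochner_integral_sketch_error_sq show ?thesis
    by (simp add: has_bochner_integral_iff)
qed

end
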